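(* For any $n\ge1$, the $\mathbb{S}_n$-module $\mathcal{C}om\mathcal{T}rias(n)$ is isomorphic to the free $k$-module on $\mathcal{C}om\mathcal{T}rias_n=\{e^n_J\mid J\subset[n],\ J\ne\emptyset\}$, where the action of $\mathbb{S}_n$ is induced by the natural action on the subsets $J$ of $[n]$, and the composition of the operad $\mathcal{C}om\mathcal{T}rias$ is given by $$e^k_J\otimes e^{i_1}_{J_1}\otimes\cdots\otimes e^{i_k}_{J_k}\mapsto e^n_{\bar J},\qquad n=i_1+\cdots+i_k,\quad \bar J=\bigcup_{j\in J}\big((i_1+\cdots+i_{j-1})+J_j\big),$$ where $(i_1+\cdots+i_{j-1})+J_j=\{i_1+\cdots+i_{j-1}+a\mid a\in J_j\}$.
   Context: $k$ denotes $\mathbb{Z}$, $\mathbb{Q}$, $\mathbb{F}_p$ or a field of characteristic $0$. A commutative trialgebra is a $k$-module $A$ with two binary operations $*$ and $\bullet$ such that $(x*y)*z=x*(y*z)=x*(z*y)$; $x\bullet y=y\bullet x$ and $(x\bullet y)\bullet z=x\bullet(y\bullet z)$; and $x*(y\bullet z)=x*(y*z)$, $(x\bullet y)*z=x\bullet(y*z)$. $\mathcal{C}om\mathcal{T}rias$ is the (quadratic) operad encoding commutative trialgebras, and $\mathcal{C}om\mathcal{T}rias(n)$ its arity-$n$ component. *)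

theory Defs
  imports "HOL-Combinatorics.Permutations"
begin

text \<open>Operadic terms in the two generating operations (* and the commutative bullet),
  with leaves labelled by variables (natural numbers).\<close>
datatype tm = V nat | Star tm tm | Bul tm tm

fun leaves :: "tm \<Rightarrow> nat list" where
  "leaves (V i) = [i]"
| "leaves (Star s t) = leaves s @ leaves t"
| "leaves (Bul s t) = leaves s @ leaves t"

text \<open>multilinear term in the variables 1..n: a basis element of the free operad in arity n\<close>
definition multilin :: "nat \<Rightarrow> tm \<Rightarrow> bool" where
  "multilin n t \<longleftrightarrow> distinct (leaves t) \<and> set (leaves t) = {1..n}"

fun relabel :: "(nat \<Rightarrow> nat) \<Rightarrow> tm \<Rightarrow> tm" where
  "relabel f (V i) = V (f i)"
| "relabel f (Star s t) = Star (relabel f s) (relabel f t)"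
| "relabel f (Bul s t) = Bul (relabel f s) (relabel f t)"

text \<open>substitution of terms for variables (operadic composition on representatives)\<close>
fun subst :: "(nat \<Rightarrow> tm) \<Rightarrow> tm \<Rightarrow> tm" where
  "subst f (V i) = f i"
| "subst f (Star s t) = Star (subst f s) (subst f t)"
| "subst f (Bul s t) = Bul (subst f s) (subst f t)"

inductive ax :: "tm \<Rightarrow> tm \<Rightarrow> bool" where
  "ax (Star (Star x y) z) (Star x (Star y z))"
| "ax (Star x (Star y z)) (Star x (Star z y))"
| "ax (Bul x y) (Bul y x)"
| "ax (Bul (Bul x y) z) (Bul x (Bul y z))"
| "ax (Star x (Bul y z)) (Star x (Star y z))"
| "ax (Star (Bul x y) z) (Bul x (Star y z))"

inductive tstep :: "tm \<Rightarrow> tm \<Rightarrow> bool" where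
  "ax s t \<Longrightarrow> tstep s t"
| "tstep s t \<Longrightarrow> tstep (Star s u) (Star t u)"
| "tstep s t \<Longrightarrow> tstep (Star u s) (Star u t)"
| "tstep s t \<Longrightarrow> tstep (Bul s u) (Bul t u)"
| "tstep s t \<Longrightarrow> tstep (Bul u s) (Bul u t)"

text \<open>Elements of the free operad (over k) are finitely supported functions tm => k;
  vec t is the basis vector of the term t.\<close>
definition vec :: "tm \<Rightarrow> tm \<Rightarrow> 'k::comm_ring_1" where
  "vec t = (\<lambda>s. if s = t then 1 else 0)"

text \<open>The operadic ideal generated by the relations: the k-span of all differences
  vec s - vec s' where s' arises from s by applying one relation inside a context.\<close>
inductive rel_ideal :: "(tm \<Rightarrow> 'k::comm_ring_1) \<Rightarrow> bool" where
  zero: "rel_ideal (\<lambda>_. 0)"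
| add: "rel_ideal r \<Longrightarrow> tstep s s' \<Longrightarrow> rel_ideal (\<lambda>u. r u + c * (vec s u - vec s' u))"

text \<open>ComTrias(n) = (free operad)(n) / ideal(n). Two elements are equal in ComTrias iff
  their difference lies in rel_ideal.\<close>
definition eqv :: "(tm \<Rightarrow> 'k::comm_ring_1) \<Rightarrow> (tm \<Rightarrow> 'k) \<Rightarrow> bool" where
  "eqv a b \<longleftrightarrow> rel_ideal (\<lambda>u. a u - b u)"

definition subsets_ne :: "nat \<Rightarrow> nat set set" where
  "subsets_ne n = {J. J \<subseteq> {1..n} \<and> J \<noteq> {}}"

end

theory Submission
  imports Defs
begin

(* Modulo the relations, every term is equivalent to a normal form
     (j_1 \<bullet> (j_2 \<bullet> ... \<bullet> j_k)) * i_1 * ... * i_l     (the stars associated to the left)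
   determined by the set J = {j_1 < ... < j_k} of its visible variables, those not lying in the
   right argument of any *: the relations flatten every right argument of * into a chain of stars
   and permute the variables within the bullet part and within the star part. Conversely, every
   relation preserves J, so summing the coefficients of all terms with a given J is a linear
   functional vanishing on the ideal; this gives linear independence. Relabelling and
   substituting normal forms yields multilinear terms with visible set sigma ` J, resp. the union
   of the shifted J_j over j in J, hence equivariance and the composition formula. *)

section \<open>Equivalence of terms\<close>

abbreviation trias_equiv :: "tm \<Rightarrow> tm \<Rightarrow> bool" (infix \<open>\<approx>\<close> 50) where
  "s \<approx> t \<equiv> equivclp tstep s t"

lemmas trias_equiv_ax = ax.intros[THEN tstep.intros(1), THEN r_into_equivclp[of tstep]]

lemma trias_equiv_context:
  assumes "s \<approx> s'"
  shows "Star s u \<approx> Star s' u" "Star u s \<approx> Star u s'" "Bul s u \<approx> Bul s' u" "Bul u s \<approx> Bul u s'"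
  using assms by (induction rule: equivclp_induct) (auto intro: equivclp_into_equivclp tstep.intros)

lemma trias_equiv_Star: "s \<approx> s' \<Longrightarrow> t \<approx> t' \<Longrightarrow> Star s t \<approx> Star s' t'"
  by (meson trias_equiv_context equivclp_trans)

lemma trias_equiv_Bul: "s \<approx> s' \<Longrightarrow> t \<approx> t' \<Longrightarrow> Bul s t \<approx> Bul s' t'"
  by (meson trias_equiv_context equivclp_trans)

lemma eqv_vec_if_trias_equiv: "s \<approx> t \<Longrightarrow> eqv (vec s :: tm \<Rightarrow> 'k::comm_ring_1) (vec t)"
  unfolding eqv_def
proof (induction rule: equivclp_induct)
  case base
  show ?case using rel_ideal.zero by simp
next
  case (step t u)
  from step.hyps(2) show ?case
  proof
    assume "tstep t u"
    from rel_ideal.add[OF step.IH this, of 1] show ?case by (simp add: algebra_simps)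
  next
    assume "tstep u t"
    from rel_ideal.add[OF step.IH this, of "-1"] show ?case by (simp add: algebra_simps)
  qed
qed

section \<open>Normal forms\<close>

fun bul_chain :: "nat list \<Rightarrow> tm" where
  "bul_chain [] = V 0" \<comment> \<open>junk value: bullet chains are only formed of nonempty lists\<close>
| "bul_chain [a] = V a"
| "bul_chain (a # b # l) = Bul (V a) (bul_chain (b # l))"

fun star_chain :: "tm \<Rightarrow> nat list \<Rightarrow> tm" where
  "star_chain x [] = x"
| "star_chain x (a # l) = star_chain (Star x (V a)) l"

lemma bul_chain_Cons: "l \<noteq> [] \<Longrightarrow> bul_chain (a # l) = Bul (V a) (bul_chain l)"
  by (cases l) auto

lemma leaves_bul_chain: "l \<noteq> [] \<Longrightarrow> leaves (bul_chain l) = l"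
  by (induction l rule: bul_chain.induct) auto

lemma star_chain_append [simp]: "star_chain x (p @ q) = star_chain (star_chain x p) q"
  by (induction p arbitrary: x) auto

lemma leaves_star_chain [simp]: "leaves (star_chain x l) = leaves x @ l"
  by (induction l arbitrary: x) auto

lemma star_chain_cong: "x \<approx> y \<Longrightarrow> star_chain x l \<approx> star_chain y l"
  by (induction l arbitrary: x y) (simp_all add: trias_equiv_Star)

lemma Bul_left_commute: "Bul a (Bul b c) \<approx> Bul b (Bul a c)"
proof -
  have "Bul a (Bul b c) \<approx> Bul (Bul a b) c"
    by (rule equivclp_sym, rule trias_equiv_ax)
  also have "\<dots> \<approx> Bul (Bul b a) c"
    by (simp add: trias_equiv_Bul trias_equiv_ax)
  also have "\<dots> \<approx> Bul b (Bul a c)"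
    by (rule trias_equiv_ax)
  finally show ?thesis .
qed

lemma bul_chain_insort: "l \<noteq> [] \<Longrightarrow> Bul (V a) (bul_chain l) \<approx> bul_chain (insort a l)"
proof (induction l)
  case (Cons b l)
  show ?case
  proof (cases "a \<le> b \<or> l = []")
    case True
    then show ?thesis by (auto simp: bul_chain_Cons trias_equiv_ax)
  next
    case False
    then have "Bul (V a) (bul_chain (b # l)) \<approx> Bul (V b) (Bul (V a) (bul_chain l))"
      by (simp add: bul_chain_Cons Bul_left_commute)
    also have "\<dots> \<approx> Bul (V b) (bul_chain (insort a l))"
      using Cons False by (simp add: trias_equiv_Bul)
    finally show ?thesis
      using False by (simp add: bul_chain_Cons)
  qed
qed simp

lemma bul_chain_sort: "bul_chain l \<approx> bul_chain (sort l)"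
proof (induction l)
  case (Cons a l)
  show ?case
  proof (cases "l = []")
    case False
    then have "bul_chain (a # l) \<approx> Bul (V a) (bul_chain (sort l))"
      using Cons.IH by (simp add: bul_chain_Cons trias_equiv_Bul)
    also have "\<dots> \<approx> bul_chain (insort a (sort l))"
      using False by (intro bul_chain_insort) (metis length_0_conv length_sort)
    finally show ?thesis by simp
  qed simp
qed simp

lemma bul_chain_perm:
  assumes "mset l = mset l'"
  shows "bul_chain l \<approx> bul_chain l'"
proof -
  have "bul_chain l \<approx> bul_chain (sort l)"
    by (rule bul_chain_sort)
  also have "sort l = sort l'"
    using assms by (metis sorted_list_of_multiset_mset)
  also have "bul_chain (sort l') \<approx> bul_chain l'"
    by (rule equivclp_sym, rule bul_chain_sort)
  finally show ?thesis .
qed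

lemma bul_chain_append:
  "p \<noteq> [] \<Longrightarrow> q \<noteq> [] \<Longrightarrow> Bul (bul_chain p) (bul_chain q) \<approx> bul_chain (p @ q)"
proof (induction p rule: bul_chain.induct)
  case (3 a b l)
  have "Bul (bul_chain (a # b # l)) (bul_chain q) \<approx> Bul (V a) (Bul (bul_chain (b # l)) (bul_chain q))"
    by (simp add: trias_equiv_ax)
  also have "\<dots> \<approx> Bul (V a) (bul_chain (b # l @ q))"
    using 3 by (simp add: trias_equiv_Bul)
  finally show ?case by simp
qed (simp_all add: bul_chain_Cons)

lemma Star_trias_equiv_star_chain: "Star x t \<approx> star_chain x (leaves t)"
proof (induction t arbitrary: x)
  case (Star p q)
  have "Star x (Star p q) \<approx> Star (Star x p) q"
    by (simp add: trias_equiv_ax equivclp_sym)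
  also have "\<dots> \<approx> star_chain (Star x p) (leaves q)"
    by (rule Star.IH(2))
  also have "\<dots> \<approx> star_chain (star_chain x (leaves p)) (leaves q)"
    by (intro star_chain_cong Star.IH(1))
  finally show ?case by simp
next
  case (Bul p q)
  have "Star x (Bul p q) \<approx> Star x (Star p q)"
    by (simp add: trias_equiv_ax)
  also have "\<dots> \<approx> Star (Star x p) q"
    by (simp add: trias_equiv_ax equivclp_sym)
  also have "\<dots> \<approx> star_chain (Star x p) (leaves q)"
    by (rule Bul.IH(2))
  also have "\<dots> \<approx> star_chain (star_chain x (leaves p)) (leaves q)"
    by (intro star_chain_cong Bul.IH(1))
  finally show ?case by simp
qed simp

(* Star x (bul_chain l) flattens to star_chain x l, so the permutation invariance of
   bullet chains carries over to star chains. *)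
lemma star_chain_perm:
  assumes "mset l = mset l'"
  shows "star_chain x l \<approx> star_chain x l'"
proof (cases "l = []")
  case True
  with assms show ?thesis by simp
next
  case False
  with assms have "l' \<noteq> []" by auto
  have "star_chain x l \<approx> Star x (bul_chain l)"
    using Star_trias_equiv_star_chain[of x "bul_chain l"] False
    by (simp add: leaves_bul_chain equivclp_sym)
  also have "\<dots> \<approx> Star x (bul_chain l')"
    using assms by (simp add: trias_equiv_Star bul_chain_perm)
  also have "\<dots> \<approx> star_chain x l'"
    using Star_trias_equiv_star_chain[of x "bul_chain l'"] \<open>l' \<noteq> []\<close>
    by (simp add: leaves_bul_chain)
  finally show ?thesis .
qed

lemma Bul_star_chain: "Bul x (star_chain y l) \<approx> star_chain (Bul x y) l"
proof (induction l arbitrary: y)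
  case (Cons a l)
  have "Bul x (star_chain y (a # l)) \<approx> star_chain (Bul x (Star y (V a))) l"
    using Cons.IH by simp
  also have "\<dots> \<approx> star_chain (Star (Bul x y) (V a)) l"
    by (intro star_chain_cong) (simp add: trias_equiv_ax equivclp_sym)
  finally show ?case by simp
qed simp

fun visible :: "tm \<Rightarrow> nat list" where
  "visible (V i) = [i]"
| "visible (Star s t) = visible s"
| "visible (Bul s t) = visible s @ visible t"

fun hidden :: "tm \<Rightarrow> nat list" where
  "hidden (V i) = []"
| "hidden (Star s t) = hidden s @ leaves t"
| "hidden (Bul s t) = hidden s @ hidden t"

lemma visible_ne: "visible t \<noteq> []"
  by (induction t) auto

lemma set_visible_subset_leaves: "set (visible t) \<subseteq> set (leaves t)"
  by (induction t) auto

lemma mset_leaves: "mset (leaves t) = mset (visible t) + mset (hidden t)"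
  by (induction t) auto

lemma visible_bul_chain: "l \<noteq> [] \<Longrightarrow> visible (bul_chain l) = l"
  by (induction l rule: bul_chain.induct) auto

lemma visible_star_chain [simp]: "visible (star_chain x l) = visible x"
  by (induction l arbitrary: x) auto

lemma trias_equiv_normal_form: "t \<approx> star_chain (bul_chain (visible t)) (hidden t)"
proof (induction t)
  case (Star s u)
  let ?x = "star_chain (bul_chain (visible s)) (hidden s)"
  have "Star s u \<approx> Star ?x u"
    using Star.IH by (simp add: trias_equiv_Star)
  also have "\<dots> \<approx> star_chain ?x (leaves u)"
    by (rule Star_trias_equiv_star_chain)
  finally show ?case by simp
next
  case (Bul s u)
  let ?X = "bul_chain (visible s)" and ?Y = "bul_chain (visible u)"
  have "Bul s u \<approx> Bul (star_chain ?X (hidden s)) (star_chain ?Y (hidden u))"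
    using Bul.IH by (simp add: trias_equiv_Bul)
  also have "\<dots> \<approx> star_chain (Bul (star_chain ?X (hidden s)) ?Y) (hidden u)"
    by (rule Bul_star_chain)
  also have "\<dots> \<approx> star_chain (Bul ?Y (star_chain ?X (hidden s))) (hidden u)"
    by (intro star_chain_cong trias_equiv_ax)
  also have "\<dots> \<approx> star_chain (star_chain (Bul ?Y ?X) (hidden s)) (hidden u)"
    by (intro star_chain_cong Bul_star_chain)
  also have "\<dots> \<approx> star_chain (star_chain (Bul ?X ?Y) (hidden s)) (hidden u)"
    by (intro star_chain_cong trias_equiv_ax)
  also have "\<dots> \<approx> star_chain (star_chain (bul_chain (visible s @ visible u)) (hidden s)) (hidden u)"
    by (intro star_chain_cong bul_chain_append visible_ne)
  finally show ?case by simp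
qed simp

definition trias_basis :: "nat \<Rightarrow> nat set \<Rightarrow> tm" where
  "trias_basis n J = star_chain (bul_chain (sorted_list_of_set J)) (sorted_list_of_set ({1..n} - J))"

lemma
  assumes "J \<in> subsets_ne n"
  shows visible_trias_basis: "set (visible (trias_basis n J)) = J"
    and multilin_trias_basis: "multilin n (trias_basis n J)"
proof -
  have J: "finite J" "J \<noteq> {}" "J \<subseteq> {1..n}"
    using assms by (auto simp: subsets_ne_def finite_subset)
  then have "sorted_list_of_set J \<noteq> []" by simp
  with J show "set (visible (trias_basis n J)) = J" "multilin n (trias_basis n J)"
    by (auto simp: trias_basis_def visible_bul_chain leaves_bul_chain multilin_def)
qed

lemma trias_basis_inj: "I \<in> subsets_ne n \<Longrightarrow> J \<in> subsets_ne n \<Longrightarrow> trias_basis n I = trias_basis n J \<longleftrightarrow> I = J"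
  by (metis visible_trias_basis)

lemma multilin_trias_equiv_basis:
  assumes "multilin n t"
  shows "t \<approx> trias_basis n (set (visible t))"
proof -
  have leaves_perm: "mset (leaves t) = mset (visible t @ hidden t)"
    by (simp add: mset_leaves)
  then have "distinct (visible t @ hidden t)"
    using assms by (metis mset_eq_imp_distinct_iff multilin_def)
  moreover have "set (visible t @ hidden t) = {1..n}"
    using assms leaves_perm by (metis mset_eq_setD multilin_def)
  ultimately have "distinct (visible t)" "distinct (hidden t)" "{1..n} - set (visible t) = set (hidden t)"
    by auto
  then have perms: "mset (visible t) = mset (sorted_list_of_set (set (visible t)))"
      "mset (hidden t) = mset (sorted_list_of_set ({1..n} - set (visible t)))"
    by (simp_all add: distinct_remdups_id sorted_list_of_set_sort_remdups)
  have "t \<approx> star_chain (bul_chain (visible t)) (hidden t)"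
    by (rule trias_equiv_normal_form)
  also have "\<dots> \<approx> star_chain (bul_chain (sorted_list_of_set (set (visible t)))) (hidden t)"
    using perms(1) by (intro star_chain_cong bul_chain_perm)
  also have "\<dots> \<approx> trias_basis n (set (visible t))"
    unfolding trias_basis_def using perms(2) by (rule star_chain_perm)
  finally show ?thesis .
qed

lemma finite_subsets_ne: "finite (subsets_ne n)"
  unfolding subsets_ne_def by (rule finite_subset[of _ "Pow {1..n}"]) auto

lemma trias_basis_spanning:
  assumes "multilin n t"
  shows "\<exists>c :: nat set \<Rightarrow> 'k::comm_ring_1. eqv (vec t) (\<lambda>u. \<Sum>J\<in>subsets_ne n. c J * vec (trias_basis n J) u)"
proof -
  let ?J = "set (visible t)"
  have "?J \<in> subsets_ne n"
    using assms visible_ne[of t] set_visible_subset_leaves[of t]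
    by (auto simp: subsets_ne_def multilin_def)
  then have indicator_sum: "(\<lambda>u. \<Sum>J\<in>subsets_ne n. (if J = ?J then 1 else 0) * vec (trias_basis n J) u)
      = (vec (trias_basis n ?J) :: tm \<Rightarrow> 'k)"
    using finite_subsets_ne by (simp add: if_distrib[of "\<lambda>x. x * _"] cong: if_cong)
  have "eqv (vec t) (\<lambda>u. \<Sum>J\<in>subsets_ne n. (if J = ?J then 1 else 0) * vec (trias_basis n J) u :: 'k)"
    unfolding indicator_sum by (intro eqv_vec_if_trias_equiv multilin_trias_equiv_basis assms)
  then show ?thesis
    by (rule exI[where x = "\<lambda>J. if J = ?J then 1 else 0"])
qed

section \<open>Linear independence\<close>

lemma tstep_set_visible: "tstep s t \<Longrightarrow> set (visible s) = set (visible t)"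
proof (induction rule: tstep.induct)
  case (1 s t)
  then show ?case by (cases rule: ax.cases) auto
qed auto

lemma sum_vec: "finite X \<Longrightarrow> (\<Sum>t\<in>X. vec s t) = (if s \<in> X then 1 else 0)"
  by (simp add: vec_def)

lemma rel_ideal_sum_invariant_class:
  assumes "rel_ideal r" and "finite S" and "\<forall>t. t \<notin> S \<longrightarrow> r t = 0"
    and invariant: "\<And>s t. tstep s t \<Longrightarrow> f s = f t"
  shows "(\<Sum>t | t \<in> S \<and> f t = a. r t) = (0 :: 'k::comm_ring_1)"
  using assms(1-3)
proof (induction arbitrary: S rule: rel_ideal.induct)
  case (add r s s' c)
  let ?S = "insert s (insert s' S)"
  let ?C = "\<lambda>X. {t. t \<in> X \<and> f t = a}"
  have fin: "finite (?C ?S)"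
    using add.prems by simp
  have "\<forall>t. t \<notin> ?S \<longrightarrow> r t = 0"
    using add.prems by (auto simp: vec_def)
  then have "(\<Sum>t\<in>?C ?S. r t) = 0"
    using add.IH[of ?S] add.prems(1) by simp
  moreover have "(\<Sum>t\<in>?C ?S. vec s t :: 'k) = (\<Sum>t\<in>?C ?S. vec s' t)"
    using invariant[OF add.hyps(2)] fin by (simp add: sum_vec)
  ultimately have "(\<Sum>t\<in>?C ?S. r t + c * (vec s t - vec s' t)) = 0"
    by (simp add: sum.distrib sum_subtractf flip: sum_distrib_left)
  moreover have "(\<Sum>t\<in>?C S. r t + c * (vec s t - vec s' t)) = (\<Sum>t\<in>?C ?S. r t + c * (vec s t - vec s' t))"
    by (rule sum.mono_neutral_left) (use fin add.prems in auto)
  ultimately show ?case by simp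
qed simp

lemma trias_basis_independent:
  fixes c :: "nat set \<Rightarrow> 'k::comm_ring_1"
  assumes "eqv (\<lambda>u. \<Sum>J\<in>subsets_ne n. c J * vec (trias_basis n J) u) (\<lambda>_. 0)"
    and J0: "J0 \<in> subsets_ne n"
  shows "c J0 = 0"
proof -
  let ?r = "\<lambda>u. \<Sum>J\<in>subsets_ne n. c J * vec (trias_basis n J) u"
  let ?S = "trias_basis n ` subsets_ne n"
  have "rel_ideal ?r"
    using assms(1) by (simp add: eqv_def)
  moreover have "finite ?S"
    using finite_subsets_ne by simp
  moreover have "\<forall>t. t \<notin> ?S \<longrightarrow> ?r t = 0"
    by (auto simp: vec_def intro!: sum.neutral)
  ultimately have "(\<Sum>t | t \<in> ?S \<and> set (visible t) = J0. ?r t) = 0"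
    by (rule rel_ideal_sum_invariant_class[where f = "\<lambda>t. set (visible t)"]) (rule tstep_set_visible)
  moreover have "{t. t \<in> ?S \<and> set (visible t) = J0} = {trias_basis n J0}"
    using J0 visible_trias_basis by auto
  moreover have "?r (trias_basis n J0) = c J0"
    using J0 finite_subsets_ne trias_basis_inj[OF J0]
    by (simp add: vec_def if_distrib[of "\<lambda>x. _ * x"] cong: if_cong)
  ultimately show ?thesis by simp
qed

section \<open>Equivariance and composition\<close>

lemma leaves_relabel [simp]: "leaves (relabel f t) = map f (leaves t)"
  by (induction t) auto

lemma visible_relabel [simp]: "visible (relabel f t) = map f (visible t)"
  by (induction t) auto

lemma leaves_subst [simp]: "leaves (subst F t) = concat (map (\<lambda>j. leaves (F j)) (leaves t))"
  by (induction t) auto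

lemma visible_subst [simp]: "visible (subst F t) = concat (map (\<lambda>j. visible (F j)) (visible t))"
  by (induction t) auto

lemma multilin_relabel_permutes:
  assumes "\<sigma> permutes {1..n}" and "multilin n t"
  shows "multilin n (relabel \<sigma> t)"
  using assms permutes_inj[OF assms(1)] permutes_image[OF assms(1)]
  by (auto simp: multilin_def distinct_map inj_on_subset[of _ UNIV])

lemma union_shifted_blocks:
  fixes ar :: "nat \<Rightarrow> nat"
  shows "(\<Union>j\<in>{1..m}. (\<lambda>a. (\<Sum>l\<in>{1..<j}. ar l) + a) ` {1..ar j}) = {1..\<Sum>l\<in>{1..m}. ar l}"
proof (induction m)
  case (Suc m)
  have "{1..Suc m} = insert (Suc m) {1..m}" and "{1..<Suc m} = {1..m}"
    by auto
  then have "(\<Union>j\<in>{1..Suc m}. (\<lambda>a. (\<Sum>l\<in>{1..<j}. ar l) + a) ` {1..ar j})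
      = {1..\<Sum>l\<in>{1..m}. ar l} \<union> {(\<Sum>l\<in>{1..m}. ar l) + 1..(\<Sum>l\<in>{1..m}. ar l) + ar (Suc m)}"
    using Suc.IH by (simp add: ac_simps)
  also have "\<dots> = {1..\<Sum>l\<in>{1..Suc m}. ar l}"
    by auto
  finally show ?case .
qed simp

lemma multilin_subst_shifted:
  fixes ar :: "nat \<Rightarrow> nat"
  assumes t: "multilin m t" and s: "\<And>j. j \<in> {1..m} \<Longrightarrow> multilin (ar j) (s j)"
  shows "multilin (\<Sum>l\<in>{1..m}. ar l) (subst (\<lambda>j. relabel (\<lambda>a. (\<Sum>l\<in>{1..<j}. ar l) + a) (s j)) t)"
proof -
  define F where "F j = relabel (\<lambda>a. (\<Sum>l\<in>{1..<j}. ar l) + a) (s j)" for j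
  have leaves_t: "distinct (leaves t)" "set (leaves t) = {1..m}"
    using t by (simp_all add: multilin_def)
  have block: "set (leaves (F j)) = (\<lambda>a. (\<Sum>l\<in>{1..<j}. ar l) + a) ` {1..ar j}"
    and length_block: "length (leaves (F j)) = ar j" if "j \<in> set (leaves t)" for j
    using s[of j] distinct_card[of "leaves (s j)"] that leaves_t by (simp_all add: F_def multilin_def)
  have "set (leaves (subst F t)) = (\<Union>j\<in>set (leaves t). set (leaves (F j)))"
    by simp
  also have "\<dots> = (\<Union>j\<in>{1..m}. (\<lambda>a. (\<Sum>l\<in>{1..<j}. ar l) + a) ` {1..ar j})"
    using block leaves_t(2) by (intro SUP_cong) simp_all
  also have "\<dots> = {1..\<Sum>l\<in>{1..m}. ar l}"
    by (rule union_shifted_blocks)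
  finally have set_leaves: "set (leaves (subst F t)) = {1..\<Sum>l\<in>{1..m}. ar l}" .
  have "length (leaves (subst F t)) = (\<Sum>j\<leftarrow>leaves t. length (leaves (F j)))"
    by (simp add: length_concat o_def)
  also have "\<dots> = (\<Sum>j\<leftarrow>leaves t. ar j)"
    using length_block by (simp cong: map_cong)
  also have "\<dots> = (\<Sum>l\<in>{1..m}. ar l)"
    using leaves_t by (simp add: sum_list_distinct_conv_sum_set)
  finally have "distinct (leaves (subst F t))"
    using set_leaves by (intro card_distinct) simp
  with set_leaves show ?thesis
    by (simp add: multilin_def F_def)
qed

lemma relabel_trias_basis:
  assumes "\<sigma> permutes {1..n}" and "J \<in> subsets_ne n"
  shows "relabel \<sigma> (trias_basis n J) \<approx> trias_basis n (\<sigma> ` J)"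
  using multilin_trias_equiv_basis[OF multilin_relabel_permutes[OF assms(1) multilin_trias_basis]]
    visible_trias_basis assms(2) by simp

lemma subst_trias_basis:
  fixes ar :: "nat \<Rightarrow> nat"
  assumes J: "J \<in> subsets_ne m" and Js: "\<And>j. j \<in> {1..m} \<Longrightarrow> Js j \<in> subsets_ne (ar j)"
  shows "subst (\<lambda>j. relabel (\<lambda>a. (\<Sum>l\<in>{1..<j}. ar l) + a) (trias_basis (ar j) (Js j))) (trias_basis m J)
    \<approx> trias_basis (\<Sum>l\<in>{1..m}. ar l) (\<Union>j\<in>J. (\<lambda>a. (\<Sum>l\<in>{1..<j}. ar l) + a) ` Js j)"
    (is "?t \<approx> _")
proof -
  have "set (visible (trias_basis (ar j) (Js j))) = Js j" if "j \<in> J" for j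
    using that J Js by (auto simp: subsets_ne_def visible_trias_basis)
  then have visible_t: "set (visible ?t) = (\<Union>j\<in>J. (\<lambda>a. (\<Sum>l\<in>{1..<j}. ar l) + a) ` Js j)"
    by (simp add: visible_trias_basis[OF J] cong: SUP_cong)
  have "multilin (\<Sum>l\<in>{1..m}. ar l) ?t"
    using J Js by (intro multilin_subst_shifted multilin_trias_basis)
  then have "?t \<approx> trias_basis (\<Sum>l\<in>{1..m}. ar l) (set (visible ?t))"
    by (rule multilin_trias_equiv_basis)
  then show ?thesis
    by (simp only: visible_t)
qed

theorem mainTheorem6:
  "\<exists>e :: nat \<Rightarrow> nat set \<Rightarrow> tm.
     \<comment> \<open>e n J is a multilinear representative of the element e^n_J of ComTrias(n)\<close>
     (\<forall>n\<ge>1. \<forall>J\<in>subsets_ne n. multilin n (e n J))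
   \<comment> \<open>spanning: the classes of e n J span ComTrias(n)\<close>
   \<and> (\<forall>n\<ge>1. \<forall>t. multilin n t \<longrightarrow>
        (\<exists>c :: nat set \<Rightarrow> 'k::comm_ring_1.
           eqv (vec t) (\<lambda>u. \<Sum>J\<in>subsets_ne n. c J * vec (e n J) u)))
   \<comment> \<open>linear independence in ComTrias(n)\<close>
   \<and> (\<forall>n\<ge>1. \<forall>c :: nat set \<Rightarrow> 'k.
        eqv (\<lambda>u. \<Sum>J\<in>subsets_ne n. c J * vec (e n J) u) (\<lambda>_. 0) \<longrightarrow>
        (\<forall>J\<in>subsets_ne n. c J = 0))
   \<comment> \<open>S_n-equivariance: the action is induced by the natural action on subsets\<close>
   \<and> (\<forall>n\<ge>1. \<forall>\<sigma>. \<sigma> permutes {1..n} \<longrightarrow> (\<forall>J\<in>subsets_ne n.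
        eqv (vec (relabel \<sigma> (e n J)) :: tm \<Rightarrow> 'k) (vec (e n (\<sigma> ` J)))))
   \<comment> \<open>operadic composition\<close>
   \<and> (\<forall>m\<ge>1. \<forall>J\<in>subsets_ne m. \<forall>ar :: nat \<Rightarrow> nat. \<forall>Js :: nat \<Rightarrow> nat set.
        (\<forall>j\<in>{1..m}. ar j \<ge> 1 \<and> Js j \<in> subsets_ne (ar j)) \<longrightarrow>
        eqv (vec (subst (\<lambda>j. relabel (\<lambda>a. (\<Sum>l\<in>{1..<j}. ar l) + a) (e (ar j) (Js j))) (e m J))
               :: tm \<Rightarrow> 'k)
            (vec (e (\<Sum>l\<in>{1..m}. ar l)
                    (\<Union>j\<in>J. (\<lambda>a. (\<Sum>l\<in>{1..<j}. ar l) + a) ` Js j))))"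
  by (intro exI[of _ trias_basis] conjI allI impI ballI eqv_vec_if_trias_equiv
      multilin_trias_basis trias_basis_spanning relabel_trias_basis subst_trias_basis)
    (auto intro: trias_basis_independent)

end
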